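(* Let $G_N=(V,E)$ be a connected, undirected, edge-weighted graph on $N$ nodes and let $v\in V$ be the initial mutant node. Then one of the following holds: (1) $\rho^{\mathrm{Bd}}_{r=1}(G_N,v)<\rho^{\mathrm{Bd}}_{r=1}(K_N)$; (2) $\rho^{\mathrm{dB}}_{r=1}(G_N,v)<\rho^{\mathrm{dB}}_{r=1}(K_N)$; (3) $\rho^{\mathrm{Bd}}_{r=1}(G_N,v)=\rho^{\mathrm{Bd}}_{r=1}(K_N)$ and $\rho^{\mathrm{dB}}_{r=1}(G_N,v)=\rho^{\mathrm{dB}}_{r=1}(K_N)$.
   Context: Each edge $\{u,v\}$ has a positive weight $w(u,v)$ and $\deg(u)=\sum_{v} w(u,v)$. Each node is occupied by a resident (fitness 1) or a mutant (fitness $r\ge 1$); $f(u)$ is the fitness at $u$ and $F=\sum_u f(u)$. Moran Birth-death (Bd) process: each step a node $u$ is chosen with probability $f(u)/F$ and its offspring replaces a neighbor $v$ chosen with probability $w(u,v)/\deg(u)$. Moran death-Birth (dB) process: each step a uniformly random node $v$ dies and is replaced by the offspring of a neighbor $u$ chosen with probability $f(u)w(u,v)/\sum_{u'}f(u')w(u',v)$. $\rho^{\mathrm{Bd}}_r(G_N,v)$ (resp. $\rho^{\mathrm{dB}}_r(G_N,v)$) is the probability that mutants eventually occupy all nodes when initially only $v$ is a mutant. $K_N$ is the unweighted complete graph on $N$ nodes, and $\rho_r(K_N)$ denotes the fixation probability of a single mutant on $K_N$ (independent of the starting node). *)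

theory Defs
  imports Complex_Main
begin

definition wdeg :: "'a set \<Rightarrow> ('a \<Rightarrow> 'a \<Rightarrow> real) \<Rightarrow> 'a \<Rightarrow> real" where
  "wdeg V w u = (\<Sum>x\<in>V. w u x)"

definition connected_wgraph :: "'a set \<Rightarrow> ('a \<Rightarrow> 'a \<Rightarrow> real) \<Rightarrow> bool" where
  "connected_wgraph V w \<longleftrightarrow>
     (\<forall>x\<in>V. \<forall>y\<in>V. (x, y) \<in> {(a, b). a \<in> V \<and> b \<in> V \<and> w a b > 0}\<^sup>*)"

definition fitness :: "real \<Rightarrow> 'a set \<Rightarrow> 'a \<Rightarrow> real" where
  "fitness r S u = (if u \<in> S then r else 1)"

definition replace_state :: "'a set \<Rightarrow> 'a \<Rightarrow> 'a \<Rightarrow> 'a set" where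
  "replace_state S u x = (if u \<in> S then insert x S else S - {x})"

definition P_Bd :: "'a set \<Rightarrow> ('a \<Rightarrow> 'a \<Rightarrow> real) \<Rightarrow> real \<Rightarrow> 'a set \<Rightarrow> 'a set \<Rightarrow> real" where
  "P_Bd V w r S T =
     (\<Sum>u\<in>V. \<Sum>x\<in>V.
        (fitness r S u / (\<Sum>u'\<in>V. fitness r S u')) * (w u x / wdeg V w u)
        * (if replace_state S u x = T then 1 else 0))"

definition P_dB :: "'a set \<Rightarrow> ('a \<Rightarrow> 'a \<Rightarrow> real) \<Rightarrow> real \<Rightarrow> 'a set \<Rightarrow> 'a set \<Rightarrow> real" where
  "P_dB V w r S T =
     (\<Sum>x\<in>V. \<Sum>u\<in>V.
        (1 / real (card V))
        * (fitness r S u * w u x / (\<Sum>u'\<in>V. fitness r S u' * w u' x))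
        * (if replace_state S u x = T then 1 else 0))"

fun nstep :: "'a set \<Rightarrow> ('a set \<Rightarrow> 'a set \<Rightarrow> real) \<Rightarrow> nat \<Rightarrow> 'a set \<Rightarrow> 'a set \<Rightarrow> real" where
  "nstep V P 0 S T = (if S = T then 1 else 0)"
| "nstep V P (Suc n) S T = (\<Sum>S'\<in>Pow V. P S S' * nstep V P n S' T)"

text \<open>Fixation probability: probability that the (absorbing) all-mutant state V is
  eventually reached, starting from the single mutant v; since V is absorbing this is
  the limit of the probability of being in state V after n steps.\<close>
definition fix_prob :: "'a set \<Rightarrow> ('a set \<Rightarrow> 'a set \<Rightarrow> real) \<Rightarrow> 'a \<Rightarrow> real" where
  "fix_prob V P v = lim (\<lambda>n. nstep V P n {v} V)"

definition rho_Bd :: "'a set \<Rightarrow> ('a \<Rightarrow> 'a \<Rightarrow> real) \<Rightarrow> real \<Rightarrow> 'a \<Rightarrow> real" where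
  "rho_Bd V w r v = fix_prob V (P_Bd V w r) v"

definition rho_dB :: "'a set \<Rightarrow> ('a \<Rightarrow> 'a \<Rightarrow> real) \<Rightarrow> real \<Rightarrow> 'a \<Rightarrow> real" where
  "rho_dB V w r v = fix_prob V (P_dB V w r) v"

definition K_weight :: "nat \<Rightarrow> nat \<Rightarrow> real" where
  "K_weight i j = (if i \<noteq> j then 1 else 0)"

text \<open>fixation probability on K_N (starting node 0; independent of the node by symmetry)\<close>
definition rho_Bd_K :: "nat \<Rightarrow> real \<Rightarrow> real" where
  "rho_Bd_K N r = rho_Bd {0..<N} K_weight r 0"

definition rho_dB_K :: "nat \<Rightarrow> real \<Rightarrow> real" where
  "rho_dB_K N r = rho_dB {0..<N} K_weight r 0"

end

theory Submission
  imports Defs "HOL-Analysis.Convex"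
begin

text \<open>At neutral fitness both processes replace a node x by the offspring of u with a
  probability c u x that does not depend on the current set of mutants. For any f with
  symmetric flux c u x * f x, the weight of the mutant set (the sum of f over it) is then a
  martingale, and by the maximum principle for the absorbing chain the fixation probability
  from v is f v divided by the total weight. Birth-death admits f = 1/deg and death-Birth
  f = deg, so the two fixation probabilities are (1/deg v)/(\<Sum>u. 1/deg u) and
  deg v/(\<Sum>u. deg u), both 1/N on K_N. Their product is at most 1/N^2 by Cauchy-Schwarz,
  so if neither is below 1/N, both equal 1/N.\<close>

section \<open>Absorbing chains on the subsets of a finite set\<close>

definition harmonic :: "'a set \<Rightarrow> ('a set \<Rightarrow> 'a set \<Rightarrow> real) \<Rightarrow> ('a set \<Rightarrow> real) \<Rightarrow> bool" where
  "harmonic V P h \<longleftrightarrow> (\<forall>S\<subseteq>V. (\<Sum>T\<in>Pow V. P S T * h T) = h S)"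

lemma harmonic_diff:
  "harmonic V P g \<Longrightarrow> harmonic V P h \<Longrightarrow> harmonic V P (\<lambda>S. g S - h S)"
  by (simp add: harmonic_def right_diff_distrib sum_subtractf)

lemma harmonic_divide:
  "harmonic V P h \<Longrightarrow> harmonic V P (\<lambda>S. h S / c)"
  by (simp add: harmonic_def sum_divide_distrib[symmetric])

locale absorbing_subset_chain =
  fixes V :: "'a set" and P :: "'a set \<Rightarrow> 'a set \<Rightarrow> real"
  assumes finite_V: "finite V"
    and nonneg: "S \<subseteq> V \<Longrightarrow> T \<subseteq> V \<Longrightarrow> 0 \<le> P S T"
    and row_sum: "S \<subseteq> V \<Longrightarrow> (\<Sum>T\<in>Pow V. P S T) = 1"
    and absorbing_full: "P V V = 1"
    and absorbing_empty: "P {} {} = 1"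
    and can_grow: "S \<subseteq> V \<Longrightarrow> S \<noteq> {} \<Longrightarrow> S \<noteq> V \<Longrightarrow> \<exists>x\<in>V - S. 0 < P S (insert x S)"
begin

lemma absorbing_row:
  assumes "A \<subseteq> V" "P A A = 1" "T \<subseteq> V" "T \<noteq> A"
  shows "P A T = 0"
proof -
  have "(\<Sum>T\<in>Pow V. P A T) = P A A + (\<Sum>T\<in>Pow V - {A}. P A T)"
    using finite_V assms(1) by (simp add: sum.remove)
  then have "(\<Sum>T\<in>Pow V - {A}. P A T) = 0"
    using row_sum assms(1,2) by simp
  then show ?thesis
    using finite_V nonneg assms by (subst (asm) sum_nonneg_eq_0_iff) auto
qed

lemma nstep_absorbing:
  assumes "A \<subseteq> V" "P A A = 1"
  shows "nstep V P n A B = (if A = B then 1 else 0)"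
proof (induction n)
  case (Suc n)
  have "nstep V P (Suc n) A B
      = P A A * nstep V P n A B + (\<Sum>T\<in>Pow V - {A}. P A T * nstep V P n T B)"
    using finite_V assms(1) by (simp add: sum.remove)
  also have "(\<Sum>T\<in>Pow V - {A}. P A T * nstep V P n T B) = 0"
    using absorbing_row[OF assms] by (intro sum.neutral) auto
  finally show ?case
    using Suc assms(2) by simp
qed simp

lemma nstep_bounds: "S \<subseteq> V \<Longrightarrow> 0 \<le> nstep V P n S B \<and> nstep V P n S B \<le> 1"
proof (induction n arbitrary: S)
  case (Suc n)
  have "0 \<le> (\<Sum>T\<in>Pow V. P S T * nstep V P n T B)"
    using Suc nonneg by (intro sum_nonneg) auto
  moreover have "(\<Sum>T\<in>Pow V. P S T * nstep V P n T B) \<le> (\<Sum>T\<in>Pow V. P S T)"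
    using Suc nonneg by (intro sum_mono) (auto intro: mult_left_le)
  ultimately show ?case
    using row_sum Suc.prems by simp
qed simp

lemma nstep_full_mono: "S \<subseteq> V \<Longrightarrow> nstep V P n S V \<le> nstep V P (Suc n) S V"
proof (induction n arbitrary: S)
  case 0
  show ?case
  proof (cases "S = V")
    case True
    then show ?thesis
      using nstep_absorbing[OF order_refl absorbing_full, of "Suc 0" V] by simp
  next
    case False
    then show ?thesis
      using nstep_bounds[OF "0.prems", of "Suc 0" V] by simp
  qed
next
  case (Suc n)
  have "(\<Sum>T\<in>Pow V. P S T * nstep V P n T V) \<le> (\<Sum>T\<in>Pow V. P S T * nstep V P (Suc n) T V)"
    using Suc nonneg by (intro sum_mono mult_left_mono) auto
  then show ?case by simp
qed

lemma nstep_full_convergent: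
  assumes "S \<subseteq> V"
  shows "(\<lambda>n. nstep V P n S V) \<longlonglongrightarrow> lim (\<lambda>n. nstep V P n S V)"
proof -
  have "incseq (\<lambda>n. nstep V P n S V)"
    using nstep_full_mono[OF assms] by (rule incseq_SucI)
  moreover have "\<forall>n. nstep V P n S V \<le> 1"
    using nstep_bounds[OF assms] by blast
  ultimately obtain L where "(\<lambda>n. nstep V P n S V) \<longlonglongrightarrow> L"
    by (rule incseq_convergent)
  then show ?thesis by (simp add: limI)
qed

lemma harmonic_absorption: "harmonic V P (\<lambda>S. lim (\<lambda>n. nstep V P n S V))"
  unfolding harmonic_def
proof (intro allI impI)
  fix S assume "S \<subseteq> V"
  let ?a = "\<lambda>S. lim (\<lambda>n. nstep V P n S V)"
  have "(\<lambda>n. nstep V P (Suc n) S V) \<longlonglongrightarrow> (\<Sum>T\<in>Pow V. P S T * ?a T)"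
    unfolding nstep.simps by (intro tendsto_sum tendsto_mult_left nstep_full_convergent) auto
  moreover have "(\<lambda>n. nstep V P (Suc n) S V) \<longlonglongrightarrow> ?a S"
    using nstep_full_convergent[OF \<open>S \<subseteq> V\<close>] by (rule LIMSEQ_Suc)
  ultimately show "(\<Sum>T\<in>Pow V. P S T * ?a T) = ?a S"
    by (rule LIMSEQ_unique)
qed

lemma harmonic_max_propagates:
  assumes h: "harmonic V P h" and le_m: "\<And>T. T \<subseteq> V \<Longrightarrow> h T \<le> m"
  shows "S \<subseteq> V \<Longrightarrow> S \<noteq> {} \<Longrightarrow> h S = m \<Longrightarrow> h V = m"
proof (induction "card (V - S)" arbitrary: S)
  case 0
  then have "S = V"
    using finite_V by auto
  then show ?case
    using "0.prems" by simp
next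
  case (Suc k)
  then have "S \<noteq> V" by auto
  then obtain x where x: "x \<in> V - S" "0 < P S (insert x S)"
    using can_grow Suc.prems by blast
  have "(\<Sum>T\<in>Pow V. P S T * (m - h T)) = m * (\<Sum>T\<in>Pow V. P S T) - (\<Sum>T\<in>Pow V. P S T * h T)"
    by (simp add: algebra_simps sum_subtractf sum_distrib_left)
  also have "\<dots> = 0"
    using row_sum h Suc.prems unfolding harmonic_def by simp
  finally have "\<forall>T\<in>Pow V. P S T * (m - h T) = 0"
    using finite_V nonneg le_m Suc.prems by (subst (asm) sum_nonneg_eq_0_iff) auto
  moreover have "insert x S \<in> Pow V"
    using x Suc.prems(1) by auto
  ultimately have "P S (insert x S) * (m - h (insert x S)) = 0"
    by blast
  with x(2) have "h (insert x S) = m"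
    by simp
  moreover have "card (V - insert x S) = k"
  proof -
    have "V - insert x S = (V - S) - {x}"
      by blast
    then show ?thesis
      using card_Diff_singleton[of x "V - S"] Suc.hyps(2) x finite_V by simp
  qed
  ultimately show ?case
    using Suc.hyps(1) Suc.prems x by blast
qed

lemma harmonic_nonpos:
  assumes "harmonic V P h" "h V \<le> 0" "h {} \<le> 0" "S \<subseteq> V"
  shows "h S \<le> 0"
proof -
  define m where "m = Max (h ` Pow V)"
  have le_m: "h T \<le> m" if "T \<subseteq> V" for T
    unfolding m_def using finite_V that by (intro Max_ge) auto
  obtain S0 where "S0 \<subseteq> V" "h S0 = m"
    unfolding m_def using finite_V Max_in[of "h ` Pow V"] by fastforce
  then have "m \<le> 0"
    using harmonic_max_propagates[OF assms(1) le_m] assms(2,3) by (cases "S0 = {}") auto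
  then show ?thesis
    using le_m[OF assms(4)] by linarith
qed

lemma harmonic_unique:
  assumes "harmonic V P g" "harmonic V P h" "g {} = h {}" "g V = h V" "S \<subseteq> V"
  shows "g S = h S"
proof -
  have "g S - h S \<le> 0"
    using harmonic_nonpos[OF harmonic_diff[OF assms(1,2)]] assms(3-5) by simp
  moreover have "h S - g S \<le> 0"
    using harmonic_nonpos[OF harmonic_diff[OF assms(2,1)]] assms(3-5) by simp
  ultimately show ?thesis
    by linarith
qed

lemma fix_prob_eq_harmonic_ratio:
  assumes "harmonic V P M" "M {} = 0" "M V \<noteq> 0" "v \<in> V"
  shows "fix_prob V P v = M {v} / M V"
proof -
  let ?a = "\<lambda>S. lim (\<lambda>n. nstep V P n S V)"
  have aV: "?a V = 1"
    using nstep_absorbing[OF order_refl absorbing_full] by simp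
  have a0: "?a {} = 0"
    using nstep_absorbing[OF empty_subsetI absorbing_empty] assms(4) by auto
  have "?a {v} = M {v} / M V"
    by (rule harmonic_unique[OF harmonic_absorption harmonic_divide[OF assms(1)]])
      (use aV a0 assms(2-4) in auto)
  then show ?thesis
    unfolding fix_prob_def .
qed

end

section \<open>Neutral replacement chains\<close>

text \<open>The offspring of u replaces x with probability c u x, whatever the mutant set S is;
  both processes take this form at r = 1.\<close>

definition replacement_chain :: "'a set \<Rightarrow> ('a \<Rightarrow> 'a \<Rightarrow> real) \<Rightarrow> 'a set \<Rightarrow> 'a set \<Rightarrow> real" where
  "replacement_chain V c S T =
     (\<Sum>u\<in>V. \<Sum>x\<in>V. c u x * (if replace_state S u x = T then 1 else 0))"

lemma replace_state_subset: "S \<subseteq> V \<Longrightarrow> x \<in> V \<Longrightarrow> replace_state S u x \<subseteq> V"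
  by (auto simp: replace_state_def)

lemma sum_replace_state:
  fixes f :: "'a \<Rightarrow> real"
  assumes "finite S"
  shows "sum f (replace_state S u x) = sum f S +
    (if u \<in> S \<and> x \<notin> S then f x else if u \<notin> S \<and> x \<in> S then - f x else 0)"
  using assms by (auto simp: replace_state_def insert_absorb sum_diff1 algebra_simps)

lemma replacement_chain_expectation:
  assumes "finite V" "S \<subseteq> V"
  shows "(\<Sum>T\<in>Pow V. replacement_chain V c S T * h T)
       = (\<Sum>u\<in>V. \<Sum>x\<in>V. c u x * h (replace_state S u x))"
proof -
  have delta: "(\<Sum>T\<in>Pow V. c u x * (if replace_state S u x = T then 1 else 0) * h T)
      = c u x * h (replace_state S u x)" if "x \<in> V" for u x
  proof -
    have "(\<Sum>T\<in>Pow V. c u x * (if replace_state S u x = T then 1 else 0) * h T)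
        = (\<Sum>T\<in>Pow V. if replace_state S u x = T then c u x * h T else 0)"
      by (intro sum.cong) auto
    then show ?thesis
      using assms that by (simp add: sum.delta' replace_state_subset)
  qed
  have "(\<Sum>T\<in>Pow V. replacement_chain V c S T * h T)
      = (\<Sum>u\<in>V. \<Sum>x\<in>V. \<Sum>T\<in>Pow V. c u x * (if replace_state S u x = T then 1 else 0) * h T)"
    unfolding replacement_chain_def sum_distrib_right
    by (subst sum.swap, rule sum.cong[OF refl], rule sum.swap)
  then show ?thesis
    using delta by simp
qed

lemma replacement_chain_absorbing:
  assumes fin: "finite V"
    and nonneg: "\<And>u x. u \<in> V \<Longrightarrow> x \<in> V \<Longrightarrow> 0 \<le> c u x"
    and total: "(\<Sum>u\<in>V. \<Sum>x\<in>V. c u x) = 1"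
    and crossing: "\<And>S. S \<subseteq> V \<Longrightarrow> S \<noteq> {} \<Longrightarrow> S \<noteq> V \<Longrightarrow> \<exists>u\<in>S. \<exists>x\<in>V - S. 0 < c u x"
  shows "absorbing_subset_chain V (replacement_chain V c)"
proof
  show "finite V" by (fact fin)
  show "0 \<le> replacement_chain V c S T" for S T
    unfolding replacement_chain_def using nonneg by (simp add: sum_nonneg)
  show "(\<Sum>T\<in>Pow V. replacement_chain V c S T) = 1" if "S \<subseteq> V" for S
    using replacement_chain_expectation[OF fin that, of c "\<lambda>_. 1"] total by simp
  show "replacement_chain V c V V = 1" "replacement_chain V c {} {} = 1"
    unfolding replacement_chain_def using total
    by (simp_all add: replace_state_def insert_absorb cong: sum.cong)
  show "\<exists>x\<in>V - S. 0 < replacement_chain V c S (insert x S)"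
    if S: "S \<subseteq> V" "S \<noteq> {}" "S \<noteq> V" for S
  proof -
    obtain u x where ux: "u \<in> S" "x \<in> V - S" "0 < c u x"
      using crossing[OF S] by blast
    have uV: "u \<in> V"
      using ux(1) S(1) by blast
    let ?t = "\<lambda>u' x'. c u' x' * (if replace_state S u' x' = insert x S then 1 else 0)"
    have "c u x = ?t u x"
      using ux by (simp add: replace_state_def)
    also have "\<dots> \<le> (\<Sum>x'\<in>V. ?t u x')"
      using fin ux(2) nonneg[OF uV] by (intro member_le_sum) auto
    also have "\<dots> \<le> (\<Sum>u'\<in>V. \<Sum>x'\<in>V. ?t u' x')"
      using fin uV nonneg by (intro member_le_sum[of u] sum_nonneg) auto
    finally have "0 < replacement_chain V c S (insert x S)"
      unfolding replacement_chain_def using ux(3) by linarith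
    with ux(2) show ?thesis
      by blast
  qed
qed

lemma replacement_chain_harmonic_sum:
  assumes fin: "finite V" and total: "(\<Sum>u\<in>V. \<Sum>x\<in>V. c u x) = 1"
    and balance: "\<And>u x. u \<in> V \<Longrightarrow> x \<in> V \<Longrightarrow> c u x * f x = c x u * f u"
  shows "harmonic V (replacement_chain V c) (sum f)"
  unfolding harmonic_def
proof (intro allI impI)
  fix S assume S: "S \<subseteq> V"
  define gain where "gain u x = (if u \<in> S \<and> x \<notin> S then c u x * f x else 0)" for u x
  have "c u x * sum f (replace_state S u x) = c u x * sum f S + gain u x - gain x u"
    if "u \<in> V" "x \<in> V" for u x
    using balance[OF that] finite_subset[OF S fin]
    by (auto simp: sum_replace_state gain_def algebra_simps)
  then have "(\<Sum>T\<in>Pow V. replacement_chain V c S T * sum f T)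
      = (\<Sum>u\<in>V. \<Sum>x\<in>V. c u x * sum f S + gain u x - gain x u)"
    using replacement_chain_expectation[OF fin S] by simp
  also have "\<dots> = sum f S * (\<Sum>u\<in>V. \<Sum>x\<in>V. c u x)
      + (\<Sum>u\<in>V. \<Sum>x\<in>V. gain u x) - (\<Sum>u\<in>V. \<Sum>x\<in>V. gain x u)"
    by (simp add: sum.distrib sum_subtractf sum_distrib_left mult_ac)
  also have "(\<Sum>u\<in>V. \<Sum>x\<in>V. gain x u) = (\<Sum>u\<in>V. \<Sum>x\<in>V. gain u x)"
    by (rule sum.swap)
  finally show "(\<Sum>T\<in>Pow V. replacement_chain V c S T * sum f T) = sum f S"
    using total by simp
qed

lemma fix_prob_replacement_chain:
  assumes fin: "finite V" and "v \<in> V"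
    and nonneg: "\<And>u x. u \<in> V \<Longrightarrow> x \<in> V \<Longrightarrow> 0 \<le> c u x"
    and total: "(\<Sum>u\<in>V. \<Sum>x\<in>V. c u x) = 1"
    and crossing: "\<And>S. S \<subseteq> V \<Longrightarrow> S \<noteq> {} \<Longrightarrow> S \<noteq> V \<Longrightarrow> \<exists>u\<in>S. \<exists>x\<in>V - S. 0 < c u x"
    and balance: "\<And>u x. u \<in> V \<Longrightarrow> x \<in> V \<Longrightarrow> c u x * f x = c x u * f u"
    and pos: "\<And>x. x \<in> V \<Longrightarrow> 0 < f x"
  shows "fix_prob V (replacement_chain V c) v = f v / sum f V"
proof -
  interpret absorbing_subset_chain V "replacement_chain V c"
    using fin nonneg total crossing by (rule replacement_chain_absorbing)
  have "0 < sum f V"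
    using fin \<open>v \<in> V\<close> pos by (intro sum_pos) auto
  then show ?thesis
    using fix_prob_eq_harmonic_ratio[OF replacement_chain_harmonic_sum[OF fin total balance]]
      \<open>v \<in> V\<close> by simp
qed

section \<open>Moran processes at neutral fitness\<close>

lemma P_Bd_neutral:
  "P_Bd V w 1 = replacement_chain V (\<lambda>u x. w u x / (real (card V) * wdeg V w u))"
  by (intro ext) (simp add: P_Bd_def replacement_chain_def fitness_def)

lemma P_dB_neutral:
  assumes "\<And>x y. w x y = w y x"
  shows "P_dB V w 1 = replacement_chain V (\<lambda>u x. w u x / (real (card V) * wdeg V w x))"
proof (intro ext)
  fix S T
  have "(\<Sum>u\<in>V. w u x) = wdeg V w x" for x
    using assms by (simp add: wdeg_def)
  then show "P_dB V w 1 S T = replacement_chain V (\<lambda>u x. w u x / (real (card V) * wdeg V w x)) S T"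
    unfolding P_dB_def replacement_chain_def fitness_def by (subst sum.swap) simp
qed

lemma sum_weight_div_wdeg:
  assumes "finite V" "V \<noteq> {}" "\<And>u. u \<in> V \<Longrightarrow> 0 < wdeg V w u"
  shows "(\<Sum>u\<in>V. \<Sum>x\<in>V. w u x / (real (card V) * wdeg V w u)) = 1"
proof -
  have "(\<Sum>x\<in>V. w u x / (real (card V) * wdeg V w u)) = 1 / real (card V)" if "u \<in> V" for u
    using assms(3)[OF that] by (simp add: sum_divide_distrib[symmetric] wdeg_def)
  then show ?thesis
    using assms(1,2) by simp
qed

lemma connected_wgraph_crossing_edge:
  assumes conn: "connected_wgraph V w" and S: "S \<subseteq> V" "S \<noteq> {}" "S \<noteq> V"
  shows "\<exists>u\<in>S. \<exists>x\<in>V - S. 0 < w u x"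
proof -
  let ?E = "{(a, b). a \<in> V \<and> b \<in> V \<and> 0 < w a b}"
  obtain s t where s: "s \<in> S" and t: "t \<in> V - S"
    using S by blast
  have "(s, t) \<in> ?E\<^sup>*"
    using conn s t S(1) unfolding connected_wgraph_def by blast
  then show ?thesis
    using t by (induction rule: rtrancl_induct) (use s in auto)
qed

lemma connected_wgraph_crossing_edge_div:
  assumes conn: "connected_wgraph V w" and S: "S \<subseteq> V" "S \<noteq> {}" "S \<noteq> V"
    and pos: "\<And>u x. u \<in> V \<Longrightarrow> x \<in> V \<Longrightarrow> 0 < D u x"
  shows "\<exists>u\<in>S. \<exists>x\<in>V - S. 0 < w u x / D u x"
proof -
  obtain u x where "u \<in> S" "x \<in> V - S" "0 < w u x"
    using connected_wgraph_crossing_edge[OF conn S] by blast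
  moreover have "0 < D u x"
    using pos \<open>u \<in> S\<close> \<open>x \<in> V - S\<close> S(1) by blast
  ultimately show ?thesis
    by (meson divide_pos_pos)
qed

lemma connected_wgraph_wdeg_pos:
  assumes conn: "connected_wgraph V w" and fin: "finite V" and two: "2 \<le> card V"
    and nonneg: "\<And>x y. 0 \<le> w x y" and u: "u \<in> V"
  shows "0 < wdeg V w u"
proof -
  obtain x where x: "x \<in> V" "0 < w u x"
    using connected_wgraph_crossing_edge[OF conn, of "{u}"] u two by fastforce
  have "w u x \<le> wdeg V w u"
    unfolding wdeg_def using fin x(1) nonneg by (intro member_le_sum) auto
  with x(2) show ?thesis
    by linarith
qed

lemma rho_Bd_neutral:
  assumes fin: "finite V" and v: "v \<in> V" and sym: "\<And>x y. w x y = w y x"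
    and nonneg: "\<And>x y. 0 \<le> w x y" and conn: "connected_wgraph V w" and two: "2 \<le> card V"
  shows "rho_Bd V w 1 v = (1 / wdeg V w v) / (\<Sum>u\<in>V. 1 / wdeg V w u)"
  unfolding rho_Bd_def P_Bd_neutral
proof (rule fix_prob_replacement_chain[OF fin v, where f = "\<lambda>u. 1 / wdeg V w u"])
  have d: "0 < wdeg V w u" if "u \<in> V" for u
    using connected_wgraph_wdeg_pos[OF conn fin two nonneg that] .
  then show "(\<Sum>u\<in>V. \<Sum>x\<in>V. w u x / (real (card V) * wdeg V w u)) = 1"
    using sum_weight_div_wdeg[OF fin] v by blast
  show "0 \<le> w u x / (real (card V) * wdeg V w u)" if "u \<in> V" for u x
    using nonneg[of u x] d[OF that] by simp
  show "\<exists>u\<in>S. \<exists>x\<in>V - S. 0 < w u x / (real (card V) * wdeg V w u)"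
    if "S \<subseteq> V" "S \<noteq> {}" "S \<noteq> V" for S
    using connected_wgraph_crossing_edge_div[OF conn that] d two by simp
  show "w u x / (real (card V) * wdeg V w u) * (1 / wdeg V w x)
      = w x u / (real (card V) * wdeg V w x) * (1 / wdeg V w u)" for u x
    by (simp add: sym[of u x] mult_ac)
  show "0 < 1 / wdeg V w x" if "x \<in> V" for x
    using d[OF that] by simp
qed

lemma rho_dB_neutral:
  assumes fin: "finite V" and v: "v \<in> V" and sym: "\<And>x y. w x y = w y x"
    and nonneg: "\<And>x y. 0 \<le> w x y" and conn: "connected_wgraph V w" and two: "2 \<le> card V"
  shows "rho_dB V w 1 v = wdeg V w v / (\<Sum>u\<in>V. wdeg V w u)"
  unfolding rho_dB_def P_dB_neutral[OF sym]
proof (rule fix_prob_replacement_chain[OF fin v, where f = "wdeg V w"])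
  have d: "0 < wdeg V w u" if "u \<in> V" for u
    using connected_wgraph_wdeg_pos[OF conn fin two nonneg that] .
  have "(\<Sum>u\<in>V. \<Sum>x\<in>V. w u x / (real (card V) * wdeg V w x))
      = (\<Sum>x\<in>V. \<Sum>u\<in>V. w x u / (real (card V) * wdeg V w x))"
    by (subst sum.swap) (simp add: sym)
  then show "(\<Sum>u\<in>V. \<Sum>x\<in>V. w u x / (real (card V) * wdeg V w x)) = 1"
    using sum_weight_div_wdeg[OF fin _ d] v by auto
  show "0 \<le> w u x / (real (card V) * wdeg V w x)" if "x \<in> V" for u x
    using nonneg[of u x] d[OF that] by simp
  show "\<exists>u\<in>S. \<exists>x\<in>V - S. 0 < w u x / (real (card V) * wdeg V w x)"
    if "S \<subseteq> V" "S \<noteq> {}" "S \<noteq> V" for S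
    using connected_wgraph_crossing_edge_div[OF conn that] d two by simp
  show "w u x / (real (card V) * wdeg V w x) * wdeg V w x
      = w x u / (real (card V) * wdeg V w u) * wdeg V w u" if "u \<in> V" "x \<in> V" for u x
    using d[OF that(1)] d[OF that(2)] by (simp add: sym[of u x])
  show "0 < wdeg V w x" if "x \<in> V" for x
    using d[OF that] .
qed

lemma wdeg_K_weight:
  assumes "u < N"
  shows "wdeg {0..<N} K_weight u = real N - 1"
proof -
  have "wdeg {0..<N} K_weight u = (\<Sum>x\<in>{0..<N}. 1 - (if u = x then 1 else 0))"
    unfolding wdeg_def K_weight_def by (rule sum.cong) auto
  also have "\<dots> = real N - 1"
    using assms by (simp add: sum_subtractf)
  finally show ?thesis .
qed

lemma connected_K_weight: "connected_wgraph {0..<N} K_weight"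
  unfolding connected_wgraph_def
proof (intro ballI)
  fix x y assume "x \<in> {0..<N}" "y \<in> {0..<N}"
  then show "(x, y) \<in> {(a, b). a \<in> {0..<N} \<and> b \<in> {0..<N} \<and> 0 < K_weight a b}\<^sup>*"
    by (cases "x = y") (auto simp: K_weight_def)
qed

lemma rho_Bd_K_neutral:
  assumes "2 \<le> N"
  shows "rho_Bd_K N 1 = 1 / real N"
proof -
  have "rho_Bd_K N 1 = (1 / (real N - 1)) / (\<Sum>u\<in>{0..<N}. 1 / (real N - 1))"
    unfolding rho_Bd_K_def using assms
    by (subst rho_Bd_neutral) (auto simp: K_weight_def connected_K_weight wdeg_K_weight)
  then show ?thesis
    using assms by (simp add: field_simps)
qed

lemma rho_dB_K_neutral:
  assumes "2 \<le> N"
  shows "rho_dB_K N 1 = 1 / real N"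
proof -
  have "rho_dB_K N 1 = (real N - 1) / (\<Sum>u\<in>{0..<N}. real N - 1)"
    unfolding rho_dB_K_def using assms
    by (subst rho_dB_neutral) (auto simp: K_weight_def connected_K_weight wdeg_K_weight)
  also have "\<dots> = (real N - 1) / (real N * (real N - 1))"
    by simp
  also have "\<dots> = 1 / real N"
    using assms by simp
  finally show ?thesis .
qed

lemma fix_prob_zero: "fix_prob V (\<lambda>_ _. 0) v = 0"
proof -
  have "(\<lambda>n. nstep V (\<lambda>_ _. 0) n {v} V) \<longlonglongrightarrow> 0"
    by (rule LIMSEQ_imp_Suc) simp
  then show ?thesis
    unfolding fix_prob_def by (rule limI)
qed

text \<open>On a single node every weight is w v v = 0, so by 0 / 0 = 0 both kernels vanish
  and the limit defining the fixation probability is 0, on G and on K_1 alike.\<close>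

lemma rho_singleton:
  assumes "w v v = 0"
  shows "rho_Bd {v} w r v = 0" "rho_dB {v} w r v = 0"
proof -
  have "P_Bd {v} w r = (\<lambda>_ _. 0)" "P_dB {v} w r = (\<lambda>_ _. 0)"
    using assms by (simp_all add: P_Bd_def P_dB_def fun_eq_iff)
  then show "rho_Bd {v} w r v = 0" "rho_dB {v} w r v = 0"
    by (simp_all add: rho_Bd_def rho_dB_def fix_prob_zero)
qed

lemma card_sq_le_sum_inverse_mult_sum:
  fixes d :: "'a \<Rightarrow> real"
  assumes "\<And>u. u \<in> V \<Longrightarrow> 0 < d u"
  shows "real (card V) ^ 2 \<le> (\<Sum>u\<in>V. 1 / d u) * (\<Sum>u\<in>V. d u)"
proof -
  have d_nonneg: "0 \<le> d u" if "u \<in> V" for u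
    using assms[OF that] by simp
  have "(\<Sum>u\<in>V. 1 / sqrt (d u) * sqrt (d u)) = (\<Sum>u\<in>V. 1)"
    using assms by (intro sum.cong) (auto simp: less_le)
  moreover have "(\<Sum>u\<in>V. (1 / sqrt (d u))\<^sup>2) = (\<Sum>u\<in>V. 1 / d u)"
    using d_nonneg by (intro sum.cong) (auto simp: power_divide)
  moreover have "(\<Sum>u\<in>V. (sqrt (d u))\<^sup>2) = (\<Sum>u\<in>V. d u)"
    using d_nonneg by (intro sum.cong) auto
  ultimately show ?thesis
    using Cauchy_Schwarz_ineq_sum[of "\<lambda>u. 1 / sqrt (d u)" "\<lambda>u. sqrt (d u)" V] by simp
qed

lemma eq_inverse_if_ge_inverse_and_mult_le:
  fixes a b n :: real
  assumes "0 < n" "1 / n \<le> a" "1 / n \<le> b" "a * b \<le> 1 / n ^ 2"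
  shows "a = 1 / n \<and> b = 1 / n"
proof -
  have inv_pos: "0 < 1 / n"
    using assms(1) by simp
  then have "0 \<le> a" "0 \<le> b"
    using assms(2,3) by linarith+
  have "a * b \<le> (1 / n) * (1 / n)"
    using assms(4) by (simp add: power2_eq_square)
  then have "a * (1 / n) \<le> (1 / n) * (1 / n)" "b * (1 / n) \<le> (1 / n) * (1 / n)"
    using mult_left_mono[OF assms(3) \<open>0 \<le> a\<close>] mult_right_mono[OF assms(2) \<open>0 \<le> b\<close>]
    by (simp_all add: mult.commute)
  then have "a \<le> 1 / n" "b \<le> 1 / n"
    using inv_pos mult_right_le_imp_le by blast+
  with assms(2,3) show ?thesis
    by linarith
qed

theorem theorem1:
  fixes V :: "'a set" and w :: "'a \<Rightarrow> 'a \<Rightarrow> real" and v :: 'a and N :: nat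
  assumes "finite V" and "card V = N" and "v \<in> V"
    and "\<And>x y. w x y = w y x"
    and "\<And>x y. w x y \<ge> 0"
    and "\<And>x. w x x = 0"
    and "connected_wgraph V w"
  shows "rho_Bd V w 1 v < rho_Bd_K N 1
       \<or> rho_dB V w 1 v < rho_dB_K N 1
       \<or> (rho_Bd V w 1 v = rho_Bd_K N 1 \<and> rho_dB V w 1 v = rho_dB_K N 1)"
proof (cases "N = 1")
  case True
  then have "V = {v}" "{0..<N} = {0::nat}"
    using assms(2,3) by (auto simp: card_1_singleton_iff)
  then show ?thesis
    using rho_singleton[of w v 1] rho_singleton[of K_weight 0 1] assms(6)
    by (simp add: rho_Bd_K_def rho_dB_K_def K_weight_def)
next
  case False
  then have N: "2 \<le> N"
    using assms(1-3) card_0_eq[of V] by fastforce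
  define d where "d = wdeg V w"
  have d: "0 < d u" if "u \<in> V" for u
    unfolding d_def using connected_wgraph_wdeg_pos[OF assms(7,1) _ assms(5) that] assms(2) N by simp
  have "rho_Bd V w 1 v * rho_dB V w 1 v = 1 / ((\<Sum>u\<in>V. 1 / d u) * (\<Sum>u\<in>V. d u))"
    using rho_Bd_neutral[OF assms(1,3-5,7)] rho_dB_neutral[OF assms(1,3-5,7)] N d[OF assms(3)]
    by (simp add: d_def assms(2))
  also have "\<dots> \<le> 1 / real N ^ 2"
    using card_sq_le_sum_inverse_mult_sum[of V d] d N assms(2) by (intro frac_le) auto
  finally have prod: "rho_Bd V w 1 v * rho_dB V w 1 v \<le> 1 / real N ^ 2" .
  have "1 / real N \<le> rho_Bd V w 1 v \<Longrightarrow> 1 / real N \<le> rho_dB V w 1 v \<Longrightarrow>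
      rho_Bd V w 1 v = 1 / real N \<and> rho_dB V w 1 v = 1 / real N"
    using eq_inverse_if_ge_inverse_and_mult_le[OF _ _ _ prod] N by simp
  then show ?thesis
    using rho_Bd_K_neutral[OF N] rho_dB_K_neutral[OF N] by force
qed

end
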